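(* Let $(\Omega,\mathcal{F},P)$ be a probability space and $T:\Omega\to\Omega$ a measurable transformation. Suppose there exists an upper probability $V$ on $(\Omega,\mathcal{F})$ which is $T$-invariant and ergodic with respect to $T$, with $P\in\operatorname{core}(V)$. Then there exists a unique ergodic probability $Q\in\mathcal{M}^e(T)\cap\operatorname{core}(V)$ such that for every $f\in L^1(\Omega,\mathcal{F},Q)$, $$\lim_{n\to\infty}\frac{1}{n}\sum_{i=0}^{n-1}f(T^i\omega)=\int f\,dQ\quad\text{for }P\text{-a.s. }\omega\in\Omega.$$
   Context: A capacity is a monotone map $\mu:\mathcal{F}\to[0,1]$ with $\mu(\emptyset)=0,\mu(\Omega)=1$. An upper probability is a capacity $V$ with $V(A)=\max_{P'\in\Lambda}P'(A)$ for a weak* (setwise convergence) compact set $\Lambda$ of probabilities. $V$ is $T$-invariant if $V(T^{-1}A)=V(A)$ for all $A$. $\mathcal{I}=\{A\in\mathcal{F}:T^{-1}A=A\}$. A $T$-invariant capacity $\mu$ is ergodic if for each $B\in\mathcal{I}$, $\mu(B)\in\{0,1\}$ and ($\mu(B)=0$ or $\mu(\Omega\setminus B)=0$). $\operatorname{core}(V)$ is the set of finitely additive normalized set functions dominated by $V$. $\mathcal{M}^e(T)$ denotes the $T$-invariant probabilities $Q$ with $Q(\mathcal{I})\subset\{0,1\}$. $P$ itself need not be $T$-invariant. *)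

theory Defs
  imports "HOL-Probability.Probability"
begin

definition capacity :: "'a measure \<Rightarrow> ('a set \<Rightarrow> real) \<Rightarrow> bool" where
  "capacity M V \<longleftrightarrow>
     V {} = 0 \<and> V (space M) = 1 \<and>
     (\<forall>A\<in>sets M. \<forall>B\<in>sets M. A \<subseteq> B \<longrightarrow> V A \<le> V B)"

text \<open>Upper probability: V(A) = max over a set Lambda of probability measures on (Omega,F),
  Lambda nonempty and compact for the topology of setwise convergence (the product
  topology on set functions A \<mapsto> P'(A)).\<close>
definition upper_probability :: "'a measure \<Rightarrow> ('a set \<Rightarrow> real) \<Rightarrow> bool" where
  "upper_probability M V \<longleftrightarrow> capacity M V \<and>
     (\<exists>\<Lambda> :: 'a measure set.
        \<Lambda> \<noteq> {} \<and>
        (\<forall>P'\<in>\<Lambda>. prob_space P' \<and> sets P' = sets M) \<and>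
        compact ((\<lambda>P' A. measure P' A) ` \<Lambda>) \<and>
        (\<forall>A\<in>sets M. \<exists>P'\<in>\<Lambda>. V A = measure P' A \<and>
                        (\<forall>P''\<in>\<Lambda>. measure P'' A \<le> V A)))"

definition invariant_sets :: "'a measure \<Rightarrow> ('a \<Rightarrow> 'a) \<Rightarrow> 'a set set" where
  "invariant_sets M T = {A \<in> sets M. T -` A \<inter> space M = A}"

definition T_invariant_capacity :: "'a measure \<Rightarrow> ('a \<Rightarrow> 'a) \<Rightarrow> ('a set \<Rightarrow> real) \<Rightarrow> bool" where
  "T_invariant_capacity M T \<mu> \<longleftrightarrow> (\<forall>A\<in>sets M. \<mu> (T -` A \<inter> space M) = \<mu> A)"

definition ergodic_capacity :: "'a measure \<Rightarrow> ('a \<Rightarrow> 'a) \<Rightarrow> ('a set \<Rightarrow> real) \<Rightarrow> bool" where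
  "ergodic_capacity M T \<mu> \<longleftrightarrow> T_invariant_capacity M T \<mu> \<and>
     (\<forall>B\<in>invariant_sets M T. (\<mu> B = 0 \<or> \<mu> B = 1) \<and>
                               (\<mu> B = 0 \<or> \<mu> (space M - B) = 0))"

definition in_core :: "'a measure \<Rightarrow> ('a set \<Rightarrow> real) \<Rightarrow> 'a measure \<Rightarrow> bool" where
  "in_core M V Q \<longleftrightarrow> (\<forall>A\<in>sets M. measure Q A \<le> V A)"

definition ergodic_probs :: "'a measure \<Rightarrow> ('a \<Rightarrow> 'a) \<Rightarrow> 'a measure set" where
  "ergodic_probs M T = {Q. prob_space Q \<and> sets Q = sets M \<and>
     (\<forall>A\<in>sets M. measure Q (T -` A \<inter> space M) = measure Q A) \<and>
     (\<forall>B\<in>invariant_sets M T. measure Q B = 0 \<or> measure Q B = 1)}"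

end

theory Submission
  imports Defs
begin

text \<open>The Cesaro averages of the image measures of \<open>P\<close> under \<open>T\<^sup>i\<close> have a cluster point in
  the compact cube \<open>[0,1]\<^bsup>F\<^esup>\<close>; it is finitely additive, \<open>T\<close>-invariant and dominated by \<open>V\<close>.
  Compactness of the set of priors makes \<open>V\<close> continuous along decreasing sequences with empty
  intersection, so the cluster point is countably additive: an invariant probability \<open>Q\<close> in the
  core. If \<open>g\<close> has negative \<open>Q\<close>-integral, the set where the Birkhoff sums of \<open>g\<close> are unbounded
  above is invariant and, by the maximal ergodic inequality, not of full \<open>Q\<close>-measure; ergodicity
  of \<open>V\<close> then gives it capacity zero, hence \<open>P\<close>-measure zero. Applying this to \<open>\<plusminus>(f - c)\<close> for
  constants \<open>c\<close> on either side of \<open>\<integral>f dQ\<close> yields the ergodic theorem \<open>P\<close>-a.s., and indicator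
  functions show that the limits determine \<open>Q\<close>.\<close>

section \<open>Birkhoff sums and the maximal ergodic inequality\<close>

definition birkhoff_sum :: "('a \<Rightarrow> 'a) \<Rightarrow> ('a \<Rightarrow> real) \<Rightarrow> nat \<Rightarrow> 'a \<Rightarrow> real" where
  "birkhoff_sum T g n x = (\<Sum>i<n. g ((T ^^ i) x))"

lemma birkhoff_sum_0 [simp]: "birkhoff_sum T g 0 x = 0"
  by (simp add: birkhoff_sum_def)

lemma birkhoff_sum_Suc: "birkhoff_sum T g (Suc n) x = g x + birkhoff_sum T g n (T x)"
  unfolding birkhoff_sum_def sum.lessThan_Suc_shift by (simp add: funpow_Suc_right del: funpow.simps)

lemma birkhoff_sum_measurable [measurable]:
  assumes "T \<in> M \<rightarrow>\<^sub>M M" "g \<in> borel_measurable M"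
  shows "birkhoff_sum T g n \<in> borel_measurable M"
  unfolding birkhoff_sum_def using assms by measurable

lemma bdd_above_birkhoff_sum_comp:
  "bdd_above (range (\<lambda>n. birkhoff_sum T g n (T x))) \<longleftrightarrow> bdd_above (range (\<lambda>n. birkhoff_sum T g n x))"
proof
  assume "bdd_above (range (\<lambda>n. birkhoff_sum T g n (T x)))"
  then obtain K where "\<And>n. birkhoff_sum T g n (T x) \<le> K" by (auto simp: bdd_above_def)
  then have "birkhoff_sum T g n x \<le> max 0 (g x + K)" for n
    by (cases n) (auto simp: birkhoff_sum_Suc intro!: max.coboundedI2 add_left_mono)
  then show "bdd_above (range (\<lambda>n. birkhoff_sum T g n x))" by (auto simp: bdd_above_def)
next
  assume "bdd_above (range (\<lambda>n. birkhoff_sum T g n x))"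
  then obtain K where "\<And>n. birkhoff_sum T g n x \<le> K" by (auto simp: bdd_above_def)
  then have "birkhoff_sum T g n (T x) \<le> K - g x" for n
    using birkhoff_sum_Suc[of T g n x] by (metis le_diff_eq add.commute)
  then show "bdd_above (range (\<lambda>n. birkhoff_sum T g n (T x)))" by (auto simp: bdd_above_def)
qed

fun birkhoff_max :: "('a \<Rightarrow> 'a) \<Rightarrow> ('a \<Rightarrow> real) \<Rightarrow> nat \<Rightarrow> 'a \<Rightarrow> real" where
  "birkhoff_max T g 0 = (\<lambda>x. 0)"
| "birkhoff_max T g (Suc N) = (\<lambda>x. max (birkhoff_max T g N x) (birkhoff_sum T g (Suc N) x))"

lemma birkhoff_max_nonneg: "0 \<le> birkhoff_max T g N x"
  by (induction N) auto

lemma birkhoff_sum_le_max: "k \<le> N \<Longrightarrow> birkhoff_sum T g k x \<le> birkhoff_max T g N x"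
  by (induction N) (auto simp: le_Suc_eq)

lemma birkhoff_max_mono: "N \<le> N' \<Longrightarrow> birkhoff_max T g N x \<le> birkhoff_max T g N' x"
  by (induction N') (auto simp: le_Suc_eq)

lemma birkhoff_max_le_comp: "birkhoff_max T g N x \<le> max 0 (g x + birkhoff_max T g N (T x))"
proof (induction N)
  case (Suc N)
  have "birkhoff_max T g N (T x) \<le> birkhoff_max T g (Suc N) (T x)"
    by (rule birkhoff_max_mono) simp
  moreover have "birkhoff_sum T g N (T x) \<le> birkhoff_max T g (Suc N) (T x)"
    by (rule birkhoff_sum_le_max) simp
  ultimately show ?case
    unfolding birkhoff_max.simps(2)[of T g N] birkhoff_sum_Suc[of T g N x] using Suc by linarith
qed simp

text \<open>Integrated against an invariant measure, this is the maximal ergodic inequality.\<close>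
lemma birkhoff_max_diff_comp_le:
  "birkhoff_max T g N x - birkhoff_max T g N (T x) \<le> g x * indicator {y. 0 < birkhoff_max T g N y} x"
  using birkhoff_max_le_comp[of T g N x] birkhoff_max_nonneg[of T g N "T x"] birkhoff_max_nonneg[of T g N x]
  by (auto simp: indicator_def)

locale prob_transformation = prob_space M for M :: "'a measure" +
  fixes T :: "'a \<Rightarrow> 'a"
  assumes T_measurable [measurable]: "T \<in> M \<rightarrow>\<^sub>M M"

locale mpt = prob_transformation +
  assumes measure_vimage: "A \<in> sets M \<Longrightarrow> measure M (T -` A \<inter> space M) = measure M A"
begin

lemma distr_T: "distr M M T = M"
proof (rule measure_eqI)
  fix A assume "A \<in> sets (distr M M T)"
  then show "emeasure (distr M M T) A = emeasure M A"
    by (simp add: emeasure_distr emeasure_eq_measure measure_vimage)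
qed simp

lemma integrable_comp_T: "integrable M h \<Longrightarrow> integrable M (\<lambda>x. h (T x) :: real)"
  using integrable_distr_eq[OF T_measurable, of h] by (simp add: distr_T)

lemma integral_comp_T: "integrable M h \<Longrightarrow> (\<integral>x. h (T x) \<partial>M) = (\<integral>x. h x \<partial>M :: real)"
  using integral_distr[OF T_measurable, of h] by (simp add: distr_T)

lemma integrable_comp_funpow: "integrable M h \<Longrightarrow> integrable M (\<lambda>x. h ((T ^^ i) x) :: real)"
  by (induction i arbitrary: h) (auto simp: funpow_Suc_right dest: integrable_comp_T simp del: funpow.simps)

lemma integrable_birkhoff_sum: "integrable M g \<Longrightarrow> integrable M (birkhoff_sum T g n)"
  unfolding birkhoff_sum_def by (intro Bochner_Integration.integrable_sum integrable_comp_funpow)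

lemma integrable_birkhoff_max: "integrable M g \<Longrightarrow> integrable M (birkhoff_max T g N)"
  by (induction N) (simp_all add: integrable_birkhoff_sum)

lemma maximal_ergodic_inequality:
  assumes g: "integrable M g"
  shows "0 \<le> (\<integral>x. g x * indicator {y \<in> space M. 0 < birkhoff_max T g N y} x \<partial>M)"
proof -
  let ?S = "birkhoff_max T g N"
  have S_int: "integrable M ?S"
    using g by (rule integrable_birkhoff_max)
  then have [measurable]: "?S \<in> borel_measurable M" by measurable
  have "0 = (\<integral>x. ?S x \<partial>M) - (\<integral>x. ?S (T x) \<partial>M)"
    using integral_comp_T[OF S_int] by simp
  also have "\<dots> = (\<integral>x. ?S x - ?S (T x) \<partial>M)"
    using S_int integrable_comp_T[OF S_int] by simp
  also have "\<dots> \<le> (\<integral>x. g x * indicator {y \<in> space M. 0 < ?S y} x \<partial>M)"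
    using birkhoff_max_diff_comp_le[of T g N] S_int integrable_comp_T[OF S_int] g
    by (intro integral_mono integrable_real_mult_indicator) (auto simp: indicator_def)
  finally show ?thesis .
qed

lemma not_AE_birkhoff_sum_pos:
  assumes g: "integrable M g" and neg: "(\<integral>x. g x \<partial>M) < 0"
  shows "\<not> (AE x in M. \<exists>n. 0 < birkhoff_sum T g n x)"
proof
  assume pos: "AE x in M. \<exists>n. 0 < birkhoff_sum T g n x"
  let ?s = "\<lambda>N x. g x * indicator {y \<in> space M. 0 < birkhoff_max T g N y} x"
  have [measurable]: "g \<in> borel_measurable M" "birkhoff_max T g N \<in> borel_measurable M" for N
    using g integrable_birkhoff_max[OF g] by measurable
  have "(\<lambda>N. \<integral>x. ?s N x \<partial>M) \<longlonglongrightarrow> (\<integral>x. g x \<partial>M)"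
  proof (rule integral_dominated_convergence[where w="\<lambda>x. norm (g x)"])
    show "AE x in M. (\<lambda>N. ?s N x) \<longlonglongrightarrow> g x"
      using pos AE_space
    proof eventually_elim
      case (elim x)
      then obtain n where "0 < birkhoff_sum T g n x" by blast
      then have "\<forall>N\<ge>n. 0 < birkhoff_max T g N x"
        using birkhoff_sum_le_max by (meson less_le_trans)
      then have "\<forall>N\<ge>n. ?s N x = g x"
        using elim by simp
      then show ?case
        by (intro tendsto_eventually) (auto simp: eventually_sequentially)
    qed
  qed (use g in \<open>auto simp: indicator_def\<close>)
  then have "0 \<le> (\<integral>x. g x \<partial>M)"
    using maximal_ergodic_inequality[OF g] by (intro LIMSEQ_le_const) auto
  with neg show False by simp
qed

end

section \<open>Ergodic averages under the reference probability\<close>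

lemma in_core_measure_eq_0:
  assumes "in_core M V Q" "A \<in> sets M" "V A = 0"
  shows "measure Q A = 0"
  using assms measure_nonneg[of Q A] unfolding in_core_def by (metis antisym)

lemma ergodic_capacity_in_core:
  assumes erg: "ergodic_capacity M T V" and core: "in_core M V Q"
    and Q: "prob_space Q" "sets Q = sets M" and B: "B \<in> invariant_sets M T"
  shows "V B = 0 \<or> measure Q B = 1"
proof -
  interpret Q: prob_space Q by fact
  have B_sets: "B \<in> sets M" using B by (simp add: invariant_sets_def)
  have "V B = 0 \<or> V (space M - B) = 0"
    using erg B unfolding ergodic_capacity_def by blast
  moreover have "measure Q B = 1" if "V (space M - B) = 0"
    using in_core_measure_eq_0[OF core _ that] Q.prob_compl[of B] B_sets Q(2)
    by (simp add: sets_eq_imp_space_eq[OF Q(2)])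
  ultimately show ?thesis by blast
qed

lemma not_bdd_above_range_iff_nat:
  fixes s :: "nat \<Rightarrow> real"
  shows "\<not> bdd_above (range s) \<longleftrightarrow> (\<forall>m::nat. \<exists>n. real m < s n)"
proof
  assume "\<not> bdd_above (range s)"
  then show "\<forall>m::nat. \<exists>n. real m < s n" by (auto simp: bdd_above_def not_le)
next
  assume unbounded: "\<forall>m::nat. \<exists>n. real m < s n"
  show "\<not> bdd_above (range s)"
  proof
    assume "bdd_above (range s)"
    then obtain K where "\<And>n. s n \<le> K" by (auto simp: bdd_above_def)
    moreover obtain m :: nat where "K \<le> real m" using real_arch_simple by blast
    ultimately show False using unbounded by (meson leD order_trans)
  qed
qed

lemma AE_bdd_above_birkhoff_sum:
  assumes P: "prob_space M" and erg: "ergodic_capacity M T V" and P_core: "in_core M V M"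
    and Q: "mpt Q T" "sets Q = sets M" "in_core M V Q"
    and g: "integrable Q g" "(\<integral>x. g x \<partial>Q) < 0"
  shows "AE x in M. bdd_above (range (\<lambda>n. birkhoff_sum T g n x))"
proof -
  interpret P: prob_space M by fact
  interpret Q: mpt Q T by fact
  have [measurable]: "T \<in> M \<rightarrow>\<^sub>M M"
    using Q.T_measurable unfolding measurable_cong_sets[OF Q(2) Q(2)] .
  have [measurable]: "g \<in> borel_measurable M"
    using borel_measurable_integrable[OF g(1)] unfolding measurable_cong_sets[OF Q(2) refl] .
  define B where "B = {x \<in> space M. \<forall>m::nat. \<exists>n. real m < birkhoff_sum T g n x}"
  have B_sets: "B \<in> sets M" unfolding B_def by measurable
  have "B \<in> invariant_sets M T"
    using B_sets bdd_above_birkhoff_sum_comp[of T g] measurable_space[of T M M]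
    unfolding invariant_sets_def B_def not_bdd_above_range_iff_nat[symmetric] by auto
  moreover have "\<not> (AE x in Q. x \<in> B)"
  proof
    assume "AE x in Q. x \<in> B"
    then have "AE x in Q. \<exists>n. 0 < birkhoff_sum T g n x"
      by eventually_elim (auto simp: B_def dest!: spec[of _ "0::nat"])
    with Q.not_AE_birkhoff_sum_pos[OF g] show False by blast
  qed
  then have "measure Q B \<noteq> 1"
    using Q.prob_eq_1 B_sets Q(2) by simp
  ultimately have "V B = 0"
    using ergodic_capacity_in_core[OF erg Q(3) Q.prob_space_axioms Q(2)] by blast
  then have "AE x in M. x \<notin> B"
    using in_core_measure_eq_0[OF P_core B_sets] P.prob_eq_0[OF B_sets] by simp
  then show ?thesis
    using AE_space by eventually_elim (auto simp: B_def not_bdd_above_range_iff_nat[symmetric])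
qed

lemma tendsto_average_of_bdd_above:
  fixes s :: "nat \<Rightarrow> real"
  assumes upper: "\<And>m. bdd_above (range (\<lambda>n. s n - real n * (c + inverse (real (Suc m)))))"
    and lower: "\<And>m. bdd_above (range (\<lambda>n. real n * (c - inverse (real (Suc m))) - s n))"
  shows "(\<lambda>n. s n / real n) \<longlonglongrightarrow> c"
proof (rule tendstoI)
  fix r :: real assume "0 < r"
  then obtain m where m: "inverse (real (Suc m)) < r / 2"
    using reals_Archimedean[of "r / 2"] by auto
  define \<epsilon> where "\<epsilon> = inverse (real (Suc m))"
  obtain K1 K2 where K1: "\<And>n. s n - real n * (c + \<epsilon>) \<le> K1"
    and K2: "\<And>n. real n * (c - \<epsilon>) - s n \<le> K2"
    using upper[of m] lower[of m] unfolding \<epsilon>_def bdd_above_def by blast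
  have "\<epsilon> < r / 2" using m by (simp add: \<epsilon>_def)
  define K where "K = max K1 K2"
  have K: "s n - real n * (c + \<epsilon>) \<le> K" "real n * (c - \<epsilon>) - s n \<le> K" for n
    using K1[of n] K2[of n] unfolding K_def by linarith+
  have "eventually (\<lambda>n. K / real n < r / 2) sequentially"
    using \<open>0 < r\<close> by (intro order_tendstoD(2)[OF lim_const_over_n]) simp
  then show "eventually (\<lambda>n. dist (s n / real n) c < r) sequentially"
    using eventually_gt_at_top[of 0]
  proof eventually_elim
    case (elim n)
    have "s n / real n - c - \<epsilon> = (s n - real n * (c + \<epsilon>)) / real n"
      "c - \<epsilon> - s n / real n = (real n * (c - \<epsilon>) - s n) / real n"
      using elim by (simp_all add: field_simps)
    moreover have "(s n - real n * (c + \<epsilon>)) / real n \<le> K / real n"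
      "(real n * (c - \<epsilon>) - s n) / real n \<le> K / real n"
      using K by (simp_all add: divide_right_mono)
    ultimately show ?case
      using elim(1) \<open>\<epsilon> < r / 2\<close> unfolding dist_real_def abs_less_iff by linarith
  qed
qed

lemma AE_birkhoff_average_tendsto:
  assumes P: "prob_space M" and erg: "ergodic_capacity M T V" and P_core: "in_core M V M"
    and Q: "mpt Q T" "sets Q = sets M" "in_core M V Q"
    and f: "integrable Q f"
  shows "AE x in M. (\<lambda>n. birkhoff_sum T f n x / real n) \<longlonglongrightarrow> (\<integral>x. f x \<partial>Q)"
proof -
  interpret Q: mpt Q T by fact
  let ?c = "\<integral>x. f x \<partial>Q"
  note AE_bdd = AE_bdd_above_birkhoff_sum[OF P erg P_core Q]
  have "AE x in M. bdd_above (range (\<lambda>n. birkhoff_sum T f n x - real n * a))" if "?c < a" for a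
  proof -
    have "birkhoff_sum T (\<lambda>x. f x - a) n x = birkhoff_sum T f n x - real n * a" for n x
      by (simp add: birkhoff_sum_def sum_subtractf)
    then show ?thesis
      using AE_bdd[of "\<lambda>x. f x - a"] f that by (simp add: Q.prob_space)
  qed
  moreover have "AE x in M. bdd_above (range (\<lambda>n. real n * a - birkhoff_sum T f n x))" if "a < ?c" for a
  proof -
    have "birkhoff_sum T (\<lambda>x. a - f x) n x = real n * a - birkhoff_sum T f n x" for n x
      by (simp add: birkhoff_sum_def sum_subtractf)
    then show ?thesis
      using AE_bdd[of "\<lambda>x. a - f x"] f that by (simp add: Q.prob_space)
  qed
  ultimately have "AE x in M. \<forall>m::nat.
      bdd_above (range (\<lambda>n. birkhoff_sum T f n x - real n * (?c + inverse (real (Suc m))))) \<and>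
      bdd_above (range (\<lambda>n. real n * (?c - inverse (real (Suc m))) - birkhoff_sum T f n x))"
    unfolding AE_all_countable by (intro allI AE_conjI) simp_all
  then show ?thesis
  proof eventually_elim
    case (elim x)
    then show ?case by (intro tendsto_average_of_bdd_above) simp_all
  qed
qed

section \<open>An invariant probability in the core\<close>

lemma upper_probabilityE:
  assumes "upper_probability M V"
  obtains \<Lambda> where "\<forall>P'\<in>\<Lambda>. prob_space P' \<and> sets P' = sets M"
    and "compact ((\<lambda>P' A. measure P' A) ` \<Lambda>)"
    and "\<forall>A\<in>sets M. \<exists>P'\<in>\<Lambda>. V A = measure P' A"
  using assms unfolding upper_probability_def by (elim conjE exE) (erule that, assumption, fast)

lemma upper_probability_nonneg:
  assumes "upper_probability M V" "A \<in> sets M"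
  shows "0 \<le> V A"
proof -
  obtain \<Lambda> where "\<forall>A\<in>sets M. \<exists>P'\<in>\<Lambda>. V A = measure P' A"
    using assms(1) by (rule upper_probabilityE)
  then show ?thesis using assms(2) by (metis measure_nonneg)
qed

lemma upper_probability_mono:
  "upper_probability M V \<Longrightarrow> A \<in> sets M \<Longrightarrow> B \<in> sets M \<Longrightarrow> A \<subseteq> B \<Longrightarrow> V A \<le> V B"
  unfolding upper_probability_def capacity_def by blast

text \<open>This is where the compactness of the set of priors enters.\<close>
lemma upper_probability_decseq_witness:
  assumes up: "upper_probability M V" and A: "range A \<subseteq> sets M" "decseq A"
    and lower: "\<And>n. \<epsilon> \<le> V (A n)"
  obtains P' where "prob_space P'" "sets P' = sets M" "\<And>n. \<epsilon> \<le> measure P' (A n)"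
proof -
  obtain \<Lambda> where \<Lambda>: "\<forall>P'\<in>\<Lambda>. prob_space P' \<and> sets P' = sets M"
    and compact: "compact ((\<lambda>P' A. measure P' A) ` \<Lambda>)"
    and attained: "\<forall>A\<in>sets M. \<exists>P'\<in>\<Lambda>. V A = measure P' A"
    using up by (rule upper_probabilityE)
  define C where "C n = {\<psi>. \<epsilon> \<le> \<psi> (A n)}" for n
  have "(\<lambda>P' A. measure P' A) ` \<Lambda> \<inter> \<Inter>(range C) \<noteq> {}"
  proof (rule compact_imp_fip[OF compact])
    show "closed S" if "S \<in> range C" for S
      using that unfolding C_def
      by (auto intro!: closed_Collect_le continuous_intros continuous_on_product_coordinates)
    fix F assume F: "finite F" "F \<subseteq> range C"
    then obtain I where I: "finite I" "F = C ` I"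
      by (meson finite_subset_image)
    then obtain N where N: "I \<subseteq> {..N}"
      using finite_nat_iff_bounded_le by auto
    obtain P' where P': "P' \<in> \<Lambda>" "V (A N) = measure P' (A N)"
      using attained A(1) by blast
    interpret P': prob_space P' using \<Lambda> P'(1) by blast
    have "measure P' \<in> C i" if "i \<in> I" for i
    proof -
      have "A N \<subseteq> A i"
        using N that by (intro decseqD[OF A(2)]) auto
      then have "measure P' (A N) \<le> measure P' (A i)"
        using A(1) \<Lambda> P'(1) by (intro P'.finite_measure_mono) auto
      then show ?thesis using lower[of N] P'(2) by (simp add: C_def)
    qed
    moreover have "measure P' \<in> (\<lambda>P' A. measure P' A) ` \<Lambda>"
      using P'(1) by (rule rev_image_eqI) simp
    ultimately show "(\<lambda>P' A. measure P' A) ` \<Lambda> \<inter> \<Inter>F \<noteq> {}"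
      using I(2) by blast
  qed
  then obtain P' where "P' \<in> \<Lambda>" "\<And>n. \<epsilon> \<le> measure P' (A n)"
    by (auto simp: C_def)
  with \<Lambda> that show ?thesis by blast
qed

lemma upper_probability_decseq_tendsto_0:
  assumes up: "upper_probability M V" and A: "range A \<subseteq> sets M" "decseq A" "(\<Inter>i. A i) = {}"
  shows "(\<lambda>i. V (A i)) \<longlonglongrightarrow> 0"
proof (rule order_tendstoI)
  have A_sets: "A i \<in> sets M" for i using A(1) by auto
  fix a :: real assume "a < 0"
  then have "a < V (A i)" for i
    using upper_probability_nonneg[OF up A_sets] by (rule less_le_trans)
  then show "eventually (\<lambda>i. a < V (A i)) sequentially" by simp
next
  fix \<epsilon> :: real assume "0 < \<epsilon>"
  have "\<exists>n. V (A n) < \<epsilon>"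
  proof (rule ccontr)
    assume "\<nexists>n. V (A n) < \<epsilon>"
    then have "\<epsilon> \<le> V (A n)" for n by (simp add: not_less)
    then obtain P' where P': "prob_space P'" "sets P' = sets M" "\<And>n. \<epsilon> \<le> measure P' (A n)"
      using upper_probability_decseq_witness[OF up A(1,2)] by blast
    interpret P': prob_space P' by fact
    have "(\<lambda>n. measure P' (A n)) \<longlonglongrightarrow> measure P' (\<Inter>i. A i)"
      using A P'(2) by (intro P'.finite_Lim_measure_decseq) auto
    then have "\<epsilon> \<le> measure P' (\<Inter>i. A i)"
      using P'(3) by (intro LIMSEQ_le_const) auto
    with A(3) \<open>0 < \<epsilon>\<close> show False by simp
  qed
  then obtain n where n: "V (A n) < \<epsilon>" ..
  have "V (A i) < \<epsilon>" if "n \<le> i" for i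
  proof -
    have "V (A i) \<le> V (A n)"
      using A(1) decseqD[OF A(2) that] by (intro upper_probability_mono[OF up]) auto
    with n show ?thesis by linarith
  qed
  then show "eventually (\<lambda>i. V (A i) < \<epsilon>) sequentially"
    by (auto simp: eventually_sequentially)
qed

lemma ex_measure_dominated_additive:
  fixes \<phi> V :: "'a set \<Rightarrow> real"
  assumes nonneg: "\<And>A. A \<in> sets M \<Longrightarrow> 0 \<le> \<phi> A" and empty: "\<phi> {} = 0"
    and additive: "\<And>A B. A \<in> sets M \<Longrightarrow> B \<in> sets M \<Longrightarrow> A \<inter> B = {} \<Longrightarrow> \<phi> (A \<union> B) = \<phi> A + \<phi> B"
    and dominated: "\<And>A. A \<in> sets M \<Longrightarrow> \<phi> A \<le> V A"
    and V_tendsto_0: "\<And>A. range A \<subseteq> sets M \<Longrightarrow> decseq A \<Longrightarrow> (\<Inter>i. A i) = {} \<Longrightarrow> (\<lambda>i. V (A i)) \<longlonglongrightarrow> 0"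
  obtains Q where "sets Q = sets M" "\<And>A. A \<in> sets M \<Longrightarrow> emeasure Q A = ennreal (\<phi> A)"
proof
  let ?\<mu> = "\<lambda>A. ennreal (\<phi> A)"
  have pos: "positive (sets M) ?\<mu>"
    by (simp add: positive_def empty)
  have add: "additive (sets M) ?\<mu>"
    by (simp add: additive_def additive nonneg ennreal_plus)
  have "countably_additive (sets M) ?\<mu>"
  proof (rule ring_of_sets.empty_continuous_imp_countably_additive[OF _ pos add])
    show "ring_of_sets (space M) (sets M)"
      by (simp add: sets.ring_of_sets_axioms)
    fix A :: "nat \<Rightarrow> 'a set" assume A: "range A \<subseteq> sets M" "decseq A" "(\<Inter>i. A i) = {}"
    have "(\<lambda>i. \<phi> (A i)) \<longlonglongrightarrow> 0"
    proof (rule tendsto_sandwich[OF _ _ tendsto_const V_tendsto_0[OF A]])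
      show "eventually (\<lambda>i. 0 \<le> \<phi> (A i)) sequentially"
        using A(1) nonneg by auto
      show "eventually (\<lambda>i. \<phi> (A i) \<le> V (A i)) sequentially"
        using A(1) dominated by auto
    qed
    then show "(\<lambda>i. ?\<mu> (A i)) \<longlonglongrightarrow> 0"
      using tendsto_ennrealI by fastforce
  qed simp
  then show "emeasure (measure_of (space M) (sets M) ?\<mu>) A = ?\<mu> A" if "A \<in> sets M" for A
    using emeasure_measure_of_sigma[OF sets.sigma_algebra_axioms pos _ that] by blast
qed simp

definition cesaro_average :: "'a measure \<Rightarrow> ('a \<Rightarrow> 'a) \<Rightarrow> nat \<Rightarrow> 'a set \<Rightarrow> real" where
  "cesaro_average M T n A = (\<Sum>i\<le>n. measure M ((T ^^ i) -` A \<inter> space M)) / real (Suc n)"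

context prob_transformation
begin

lemma funpow_vimage_sets: "A \<in> sets M \<Longrightarrow> (T ^^ i) -` A \<inter> space M \<in> sets M"
  using measurable_sets[OF measurable_compose_n[OF T_measurable]] .

lemma funpow_Suc_vimage: "(T ^^ Suc i) -` A \<inter> space M = T -` ((T ^^ i) -` A \<inter> space M) \<inter> space M"
  using measurable_space[OF T_measurable] by (auto simp: funpow_Suc_right simp del: funpow.simps)

lemma T_invariant_capacity_funpow:
  assumes "T_invariant_capacity M T V" "A \<in> sets M"
  shows "V ((T ^^ i) -` A \<inter> space M) = V A"
proof (induction i)
  case 0 then show ?case using sets.Int_space_eq2[OF assms(2)] by simp
next
  case (Suc i)
  have "V (T -` ((T ^^ i) -` A \<inter> space M) \<inter> space M) = V ((T ^^ i) -` A \<inter> space M)"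
    using assms funpow_vimage_sets[of A i] unfolding T_invariant_capacity_def by blast
  then show ?case using Suc.IH by (simp only: funpow_Suc_vimage)
qed

lemma cesaro_average_bounds: "cesaro_average M T n A \<in> {0..1}"
proof -
  have "(\<Sum>i\<le>n. measure M ((T ^^ i) -` A \<inter> space M)) \<le> real (card {..n}) * 1"
    by (intro sum_bounded_above) simp
  then show ?thesis by (simp add: cesaro_average_def sum_nonneg)
qed

lemma cesaro_average_le_upper:
  assumes "T_invariant_capacity M T V" "in_core M V M" "A \<in> sets M"
  shows "cesaro_average M T n A \<le> V A"
proof -
  have "(\<Sum>i\<le>n. measure M ((T ^^ i) -` A \<inter> space M)) \<le> real (card {..n}) * V A"
    using assms funpow_vimage_sets T_invariant_capacity_funpow
    unfolding in_core_def by (intro sum_bounded_above) metis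
  then show ?thesis by (simp add: cesaro_average_def divide_le_eq mult.commute)
qed

lemma cesaro_average_space: "cesaro_average M T n (space M) = 1"
proof -
  have "(T ^^ i) -` space M \<inter> space M = space M" for i
    using measurable_space[OF measurable_compose_n[OF T_measurable]] by blast
  then show ?thesis by (simp add: cesaro_average_def prob_space)
qed

lemma cesaro_average_Un:
  assumes "A \<in> sets M" "B \<in> sets M" "A \<inter> B = {}"
  shows "cesaro_average M T n (A \<union> B) = cesaro_average M T n A + cesaro_average M T n B"
proof -
  have "measure M ((T ^^ i) -` (A \<union> B) \<inter> space M) =
        measure M ((T ^^ i) -` A \<inter> space M) + measure M ((T ^^ i) -` B \<inter> space M)" for i
    using assms funpow_vimage_sets[of A i] funpow_vimage_sets[of B i]
    by (subst finite_measure_Union[symmetric]) (auto intro: arg_cong[where f="measure M"])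
  then show ?thesis by (simp add: cesaro_average_def sum.distrib add_divide_distrib)
qed

lemma cesaro_average_vimage:
  assumes "A \<in> sets M"
  shows "\<bar>cesaro_average M T n (T -` A \<inter> space M) - cesaro_average M T n A\<bar> \<le> inverse (real (Suc n))"
proof -
  define a where "a i = measure M ((T ^^ i) -` A \<inter> space M)" for i
  have shift: "(T ^^ i) -` (T -` A \<inter> space M) \<inter> space M = (T ^^ Suc i) -` A \<inter> space M" for i
    using measurable_space[OF measurable_compose_n[OF T_measurable]] by auto
  have "cesaro_average M T n (T -` A \<inter> space M) - cesaro_average M T n A =
      (\<Sum>i<Suc n. a (Suc i) - a i) / real (Suc n)"
    unfolding cesaro_average_def shift a_def[symmetric] lessThan_Suc_atMost sum_subtractf
    by (simp add: diff_divide_distrib)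
  also have "\<dots> = (a (Suc n) - a 0) / real (Suc n)"
    by (simp only: sum_lessThan_telescope)
  finally have "\<bar>cesaro_average M T n (T -` A \<inter> space M) - cesaro_average M T n A\<bar>
      = \<bar>a (Suc n) - a 0\<bar> / real (Suc n)"
    by (simp add: abs_divide)
  moreover have "\<bar>a (Suc n) - a 0\<bar> \<le> 1"
    using prob_le_1 measure_nonneg unfolding a_def abs_le_iff by (smt (verit))
  ultimately show ?thesis
    by (simp add: divide_right_mono inverse_eq_divide)
qed

end

lemma compact_sequence_cluster_point:
  fixes R :: "nat \<Rightarrow> 'b::topological_space"
  assumes "compact S" "\<And>n. R n \<in> S"
  obtains \<phi> where "\<phi> \<in> S" "\<And>C. closed C \<Longrightarrow> eventually (\<lambda>n. R n \<in> C) sequentially \<Longrightarrow> \<phi> \<in> C"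
proof -
  have "filtermap R sequentially \<noteq> bot" "eventually (\<lambda>x. x \<in> S) (filtermap R sequentially)"
    by (simp_all add: filtermap_bot_iff eventually_filtermap assms(2))
  then obtain \<phi> where "\<phi> \<in> S" and cluster: "inf (nhds \<phi>) (filtermap R sequentially) \<noteq> bot"
    using assms(1) unfolding compact_filter by blast
  moreover have "\<phi> \<in> C" if "closed C" "eventually (\<lambda>n. R n \<in> C) sequentially" for C
  proof (rule ccontr)
    assume "\<phi> \<notin> C"
    then have "eventually (\<lambda>x. x \<in> - C) (nhds \<phi>)"
      using that(1) by (intro eventually_nhds_in_open) auto
    moreover have "eventually (\<lambda>x. x \<in> C) (filtermap R sequentially)"
      using that(2) by (simp add: eventually_filtermap)
    ultimately have "eventually (\<lambda>x. False) (inf (nhds \<phi>) (filtermap R sequentially))"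
      unfolding eventually_inf by force
    with cluster show False by (simp add: eventually_False)
  qed
  ultimately show ?thesis using that by blast
qed

lemma compact_unit_cube: "compact (PiE UNIV (\<lambda>_::'b. {0..1::real}))"
proof -
  have "compactin (product_topology (\<lambda>_. euclidean) UNIV) (PiE UNIV (\<lambda>_::'b. {0..1::real}))"
    by (simp add: compactin_PiE)
  then show ?thesis by (simp add: euclidean_product_topology)
qed

lemma (in prob_transformation) ex_invariant_additive_in_core:
  assumes inv: "T_invariant_capacity M T V" and core: "in_core M V M"
  obtains \<phi> :: "'a set \<Rightarrow> real"
  where "\<And>A. 0 \<le> \<phi> A" "\<phi> {} = 0" "\<phi> (space M) = 1"
    "\<And>A B. A \<in> sets M \<Longrightarrow> B \<in> sets M \<Longrightarrow> A \<inter> B = {} \<Longrightarrow> \<phi> (A \<union> B) = \<phi> A + \<phi> B"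
    "\<And>A. A \<in> sets M \<Longrightarrow> \<phi> A \<le> V A"
    "\<And>A. A \<in> sets M \<Longrightarrow> \<phi> (T -` A \<inter> space M) = \<phi> A"
proof -
  let ?R = "cesaro_average M T"
  obtain \<phi> where \<phi>_cube: "\<phi> \<in> PiE UNIV (\<lambda>_. {0..1})"
    and \<phi>_closed: "\<And>C. closed C \<Longrightarrow> eventually (\<lambda>n. ?R n \<in> C) sequentially \<Longrightarrow> \<phi> \<in> C"
    using compact_sequence_cluster_point[OF compact_unit_cube, of ?R] cesaro_average_bounds
    by (auto simp: PiE_iff)
  have \<phi>_limit: "P \<phi>" if "closed {\<psi>. P \<psi>}" "eventually (\<lambda>n. P (?R n)) sequentially" for P
    using \<phi>_closed[OF that(1)] that(2) by simp
  have \<phi>_always: "P \<phi>" if "closed {\<psi>. P \<psi>}" "\<And>n. P (?R n)" for P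
    by (rule \<phi>_limit[OF that(1)]) (simp add: that(2))
  note closed_intros = closed_Collect_eq closed_Collect_le continuous_intros continuous_on_product_coordinates
  have nonneg: "0 \<le> \<phi> A" for A
    using \<phi>_cube by auto
  have empty: "\<phi> {} = 0"
    by (rule \<phi>_always) (intro closed_intros, simp_all add: cesaro_average_def)
  have space: "\<phi> (space M) = 1"
    by (rule \<phi>_always) (intro closed_intros, simp_all add: cesaro_average_space)
  have additive: "\<phi> (A \<union> B) = \<phi> A + \<phi> B" if "A \<in> sets M" "B \<in> sets M" "A \<inter> B = {}" for A B
    by (rule \<phi>_always) (intro closed_intros, simp_all add: cesaro_average_Un[OF that])
  have dominated: "\<phi> A \<le> V A" if "A \<in> sets M" for A
    by (rule \<phi>_always) (intro closed_intros, simp_all add: cesaro_average_le_upper[OF inv core that])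
  have invariant: "\<phi> (T -` A \<inter> space M) = \<phi> A" if "A \<in> sets M" for A
  proof -
    have "\<bar>\<phi> (T -` A \<inter> space M) - \<phi> A\<bar> \<le> e" if "0 < e" for e
    proof -
      have "eventually (\<lambda>n. inverse (real (Suc n)) < e) sequentially"
        using order_tendstoD(2)[OF LIMSEQ_inverse_real_of_nat \<open>0 < e\<close>] .
      then have "eventually (\<lambda>n. \<bar>?R n (T -` A \<inter> space M) - ?R n A\<bar> \<le> e) sequentially"
      proof eventually_elim
        case (elim n)
        then show ?case using cesaro_average_vimage[OF \<open>A \<in> sets M\<close>, of n] by linarith
      qed
      then show ?thesis
        by (rule \<phi>_limit[rotated]) (intro closed_intros)
    qed
    then show ?thesis
      using field_le_epsilon[of "\<bar>\<phi> (T -` A \<inter> space M) - \<phi> A\<bar>" 0] by simp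
  qed
  show ?thesis
    by (rule that[OF nonneg empty space additive dominated invariant])
qed

lemma (in prob_transformation) ex_invariant_prob_in_core:
  assumes up: "upper_probability M V" and inv: "T_invariant_capacity M T V" and core: "in_core M V M"
  obtains Q where "mpt Q T" "sets Q = sets M" "in_core M V Q"
proof -
  obtain \<phi> where nonneg: "\<And>A. 0 \<le> \<phi> A" and empty: "\<phi> {} = 0" and space: "\<phi> (space M) = 1"
    and additive: "\<And>A B. A \<in> sets M \<Longrightarrow> B \<in> sets M \<Longrightarrow> A \<inter> B = {} \<Longrightarrow> \<phi> (A \<union> B) = \<phi> A + \<phi> B"
    and dominated: "\<And>A. A \<in> sets M \<Longrightarrow> \<phi> A \<le> V A"
    and invariant: "\<And>A. A \<in> sets M \<Longrightarrow> \<phi> (T -` A \<inter> space M) = \<phi> A"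
    by (rule ex_invariant_additive_in_core[OF inv core]) (rule that)
  obtain Q where Q: "sets Q = sets M" and emeasure_Q: "\<And>A. A \<in> sets M \<Longrightarrow> emeasure Q A = ennreal (\<phi> A)"
    using ex_measure_dominated_additive[OF nonneg empty additive dominated
        upper_probability_decseq_tendsto_0[OF up]] by blast
  have space_Q: "space Q = space M"
    using Q by (rule sets_eq_imp_space_eq)
  have measure_Q: "measure Q A = \<phi> A" if "A \<in> sets M" for A
    using emeasure_Q[OF that] nonneg[of A] by (simp add: measure_def)
  interpret Q: prob_space Q
    by (rule prob_spaceI) (simp add: space_Q emeasure_Q space)
  have "mpt Q T"
  proof unfold_locales
    show "T \<in> Q \<rightarrow>\<^sub>M Q"
      using T_measurable unfolding measurable_cong_sets[OF Q Q] .
    show "measure Q (T -` A \<inter> space Q) = measure Q A" if "A \<in> sets Q" for A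
      using that measurable_sets[OF T_measurable, of A] by (simp add: Q space_Q measure_Q invariant)
  qed
  moreover have "in_core M V Q"
    unfolding in_core_def using measure_Q dominated by simp
  ultimately show ?thesis using that Q by blast
qed

section \<open>Ergodicity and uniqueness\<close>

lemma mpt_in_core_ergodic_probs:
  assumes Q: "mpt Q T" "sets Q = sets M" and erg: "ergodic_capacity M T V" and core: "in_core M V Q"
  shows "Q \<in> ergodic_probs M T"
proof -
  interpret Q: mpt Q T by fact
  have "measure Q B = 0 \<or> measure Q B = 1" if "B \<in> invariant_sets M T" for B
    using ergodic_capacity_in_core[OF erg core Q.prob_space_axioms Q(2) that]
      in_core_measure_eq_0[OF core] that by (auto simp: invariant_sets_def)
  then show ?thesis
    using Q.measure_vimage Q(2) sets_eq_imp_space_eq[OF Q(2)]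
    by (simp add: ergodic_probs_def Q.prob_space_axioms)
qed

lemma prob_eq_of_birkhoff_averages:
  assumes M: "prob_space M" and Q: "prob_space Q" "sets Q = sets M"
    and Q': "prob_space Q'" "sets Q' = sets M"
    and conv: "\<And>f. integrable Q f \<Longrightarrow> AE x in M. (\<lambda>n. birkhoff_sum T f n x / real n) \<longlonglongrightarrow> (\<integral>x. f x \<partial>Q)"
    and conv': "\<And>f. integrable Q' f \<Longrightarrow> AE x in M. (\<lambda>n. birkhoff_sum T f n x / real n) \<longlonglongrightarrow> (\<integral>x. f x \<partial>Q')"
  shows "Q = Q'"
proof (rule measure_eqI)
  interpret P: prob_space M by fact
  interpret Q: prob_space Q by fact
  interpret Q': prob_space Q' by fact
  show "sets Q = sets Q'" using Q Q' by simp
  fix A assume "A \<in> sets Q"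
  then have A: "A \<in> sets M" "A \<in> sets Q" "A \<in> sets Q'" using Q Q' by simp_all
  have "AE x in M. (\<lambda>n. birkhoff_sum T (indicator A) n x / real n) \<longlonglongrightarrow> measure Q A"
    using conv[of "indicator A"] A(2) by (simp add: Q.emeasure_finite less_top[symmetric])
  moreover have "AE x in M. (\<lambda>n. birkhoff_sum T (indicator A) n x / real n) \<longlonglongrightarrow> measure Q' A"
    using conv'[of "indicator A"] A(3) by (simp add: Q'.emeasure_finite less_top[symmetric])
  ultimately have "AE x in M. measure Q A = measure Q' A"
    by eventually_elim (rule LIMSEQ_unique)
  then show "emeasure Q A = emeasure Q' A"
    using A by (simp add: Q.emeasure_eq_measure Q'.emeasure_eq_measure)
qed

theorem corollary3p4:
  fixes M :: "'a measure" and T :: "'a \<Rightarrow> 'a" and V :: "'a set \<Rightarrow> real"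
  assumes "prob_space M"
    and "T \<in> measurable M M"
    and "upper_probability M V"
    and "T_invariant_capacity M T V"
    and "ergodic_capacity M T V"
    and "in_core M V M"
  shows "\<exists>!Q. Q \<in> ergodic_probs M T \<and> in_core M V Q \<and>
           (\<forall>f :: 'a \<Rightarrow> real. integrable Q f \<longrightarrow>
              (AE \<omega> in M. (\<lambda>n. (\<Sum>i<n. f ((T ^^ i) \<omega>)) / real n) \<longlonglongrightarrow> integral\<^sup>L Q f))"
proof -
  interpret prob_transformation M T
    using assms(1,2) by (simp add: prob_transformation_def prob_transformation_axioms_def)
  obtain Q where Q: "mpt Q T" "sets Q = sets M" "in_core M V Q"
    using ex_invariant_prob_in_core[OF assms(3,4,6)] .
  interpret Q: mpt Q T by (rule Q(1))
  have conv: "AE \<omega> in M. (\<lambda>n. birkhoff_sum T f n \<omega> / real n) \<longlonglongrightarrow> integral\<^sup>L Q f"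
    if "integrable Q f" for f
    using AE_birkhoff_average_tendsto[OF assms(1,5,6) Q that] .
  show ?thesis
  proof (rule ex1I[of _ Q], intro conjI allI impI)
    show "Q \<in> ergodic_probs M T"
      using Q(1,2) assms(5) Q(3) by (rule mpt_in_core_ergodic_probs)
    show "in_core M V Q" by (rule Q(3))
    show "AE \<omega> in M. (\<lambda>n. (\<Sum>i<n. f ((T ^^ i) \<omega>)) / real n) \<longlonglongrightarrow> integral\<^sup>L Q f"
      if "integrable Q f" for f
      using conv[OF that] by (simp add: birkhoff_sum_def)
  next
    fix Q' assume Q': "Q' \<in> ergodic_probs M T \<and> in_core M V Q' \<and>
      (\<forall>f. integrable Q' f \<longrightarrow>
        (AE \<omega> in M. (\<lambda>n. (\<Sum>i<n. f ((T ^^ i) \<omega>)) / real n) \<longlonglongrightarrow> integral\<^sup>L Q' f))"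
    show "Q' = Q"
    proof (rule prob_eq_of_birkhoff_averages[OF assms(1) _ _ Q.prob_space_axioms Q(2) _ conv])
      show "prob_space Q'" "sets Q' = sets M"
        using Q' by (simp_all add: ergodic_probs_def)
      show "AE \<omega> in M. (\<lambda>n. birkhoff_sum T f n \<omega> / real n) \<longlonglongrightarrow> integral\<^sup>L Q' f"
        if "integrable Q' f" for f
        using Q' that by (simp add: birkhoff_sum_def)
    qed
  qed
qed

end
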